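(* Let $\boldsymbol{\mu}=(\mu_1,\dots,\mu_K)^T$, $\boldsymbol{\nu}=(\nu_1,\dots,\nu_K)^T$, $\boldsymbol{\kappa}=(\kappa_1,\dots,\kappa_K)^T\in\mathbb{R}^K$, let $\Delta^K=\{\boldsymbol{\lambda}\in\mathbb{R}^K:\sum_i\lambda_i=1,\ \lambda_i\ge0\}$, and let $$V=\max_{\boldsymbol{\lambda}\in\Delta^K}\left(\boldsymbol{\lambda}^T\boldsymbol{\kappa}-\boldsymbol{\lambda}^T\boldsymbol{\mu}\boldsymbol{\nu}^T\boldsymbol{\lambda}\right).$$ For $1\le i\le j\le K$ define $$q_{ij}(x)=\begin{cases}\dfrac{1}{\nu_j-\nu_i}\Big((x-\nu_i)(x-\nu_j)(\mu_i-\mu_j)+(x-\nu_i)(\kappa_j-\kappa_i-\mu_j\nu_j+\mu_i\nu_i)\Big)+\kappa_i-\mu_i\nu_i, & \mu_i\ne\mu_j\text{ and }\nu_i\ne\nu_j,\\ \kappa_i-\mu_i\nu_i, & \text{otherwise},\end{cases}$$ $$\tilde{\mu}_{ij}=\begin{cases}\left(\left(\dfrac{\kappa_j-\mu_j\nu_j-\kappa_i+\mu_i\nu_i}{2(\mu_j-\mu_i)}+\dfrac{\nu_i+\nu_j}{2}\right)\vee\underline{\nu}_{ij}\right)\wedge\overline{\nu}_{ij}, & \mu_i\ne\mu_j\text{ and }\nu_i\ne\nu_j,\\ \nu_i, & \text{otherwise},\end{cases}$$ with $\underline{\nu}_{ij}=\min\{\nu_i,\nu_j\}$, $\overline{\nu}_{ij}=\max\{\nu_i,\nu_j\}$.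 Then $$V=\max\Big\{\max_{1\le i\le K}\{\kappa_i-\mu_i\nu_i\},\ \max_{1\le i\le j\le K}q_{ij}(\tilde{\mu}_{ij})\Big\}.$$ Moreover, if there exists $i_0$ with $V=\kappa_{i_0}-\mu_{i_0}\nu_{i_0}$, then an optimal $\boldsymbol{\lambda}^*$ is given by $\lambda^*_{i_0}=1$ and $\lambda^*_j=0$ for $j\ne i_0$. Otherwise there exist $1\le i_0<j_0\le K$ with $V=q_{i_0j_0}(\tilde{\mu}_{i_0j_0})$, and an optimal $\boldsymbol{\lambda}^*$ is given by $$\lambda^*_{i_0}=\frac12-\frac{\kappa_{j_0}-\mu_{j_0}\nu_{j_0}-\kappa_{i_0}+\mu_{i_0}\nu_{i_0}}{2(\mu_{j_0}-\mu_{i_0})(\nu_{j_0}-\nu_{i_0})},\quad \lambda^*_{j_0}=1-\lambda^*_{i_0},\quad \lambda^*_j=0\ (j\ne i_0,j_0).$$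
   Context: $\vee$ and $\wedge$ denote max and min of real numbers. *)

theory Defs
  imports Complex_Main
begin

text \<open>Vectors in R^K are represented as functions nat => real, indexed by 1..K.\<close>

definition simplexK :: "nat \<Rightarrow> (nat \<Rightarrow> real) set" where
  "simplexK K = {l. (\<forall>i\<in>{1..K}. 0 \<le> l i) \<and> (\<Sum>i=1..K. l i) = 1}"

definition objK :: "nat \<Rightarrow> (nat \<Rightarrow> real) \<Rightarrow> (nat \<Rightarrow> real) \<Rightarrow> (nat \<Rightarrow> real) \<Rightarrow> (nat \<Rightarrow> real) \<Rightarrow> real" where
  "objK K mu nu kappa l =
     (\<Sum>i=1..K. l i * kappa i) - (\<Sum>i=1..K. \<Sum>j=1..K. l i * (mu i * nu j) * l j)"

definition VK :: "nat \<Rightarrow> (nat \<Rightarrow> real) \<Rightarrow> (nat \<Rightarrow> real) \<Rightarrow> (nat \<Rightarrow> real) \<Rightarrow> real" where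
  "VK K mu nu kappa = Sup (objK K mu nu kappa ` simplexK K)"

definition qfun :: "(nat \<Rightarrow> real) \<Rightarrow> (nat \<Rightarrow> real) \<Rightarrow> (nat \<Rightarrow> real) \<Rightarrow> nat \<Rightarrow> nat \<Rightarrow> real \<Rightarrow> real" where
  "qfun mu nu kappa i j x =
     (if mu i \<noteq> mu j \<and> nu i \<noteq> nu j then
        1 / (nu j - nu i) * ((x - nu i) * (x - nu j) * (mu i - mu j)
          + (x - nu i) * (kappa j - kappa i - mu j * nu j + mu i * nu i)) + kappa i - mu i * nu i
      else kappa i - mu i * nu i)"

definition mutilde :: "(nat \<Rightarrow> real) \<Rightarrow> (nat \<Rightarrow> real) \<Rightarrow> (nat \<Rightarrow> real) \<Rightarrow> nat \<Rightarrow> nat \<Rightarrow> real" where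
  "mutilde mu nu kappa i j =
     (if mu i \<noteq> mu j \<and> nu i \<noteq> nu j then
        min (max ((kappa j - mu j * nu j - kappa i + mu i * nu i) / (2 * (mu j - mu i)) + (nu i + nu j) / 2)
                 (min (nu i) (nu j)))
            (max (nu i) (nu j))
      else nu i)"

end

theory Submission
  imports Defs
begin

text \<open>Fix a feasible lambda and a direction d supported on three coordinates with
  sum d = 0 and d^T mu = 0 (two linear conditions in three unknowns). Along d the factor
  lambda^T mu is constant, so the objective is affine; moving in the non-decreasing sense
  until a coordinate vanishes shrinks the support without lowering the objective.
  Hence the maximum is attained on an edge t e_i + (1 - t) e_j of the simplex. There the
  objective is t c_i + (1 - t) c_j + (mu_j - mu_i)(nu_i - nu_j) t (t - 1) with
  c_i = kappa_i - mu_i nu_i: if the quadratic term is not concave it is at most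
  max c_i c_j, and otherwise, in the variable x = t nu_i + (1 - t) nu_j, it is the concave
  parabola q_ij on the interval between nu_i and nu_j, maximised at its clamped vertex.\<close>

definition dotK :: "nat \<Rightarrow> (nat \<Rightarrow> real) \<Rightarrow> (nat \<Rightarrow> real) \<Rightarrow> real" where
  "dotK K c l = (\<Sum>i=1..K. l i * c i)"

lemma objK_eq_dotK: "objK K mu nu kappa l = dotK K kappa l - dotK K mu l * dotK K nu l"
  unfolding objK_def dotK_def sum_product by (simp add: mult_ac)

lemma dotK_add_scaled: "dotK K c (\<lambda>k. l k + s * d k) = dotK K c l + s * dotK K c d"
  unfolding dotK_def by (simp add: algebra_simps sum.distrib sum_distrib_left)

lemma dotK_uminus: "dotK K c (\<lambda>k. - d k) = - dotK K c d"
  unfolding dotK_def by (simp add: sum_negf)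

lemma objK_cong:
  assumes "\<And>k. k \<in> {1..K} \<Longrightarrow> l k = l' k"
  shows "objK K mu nu kappa l = objK K mu nu kappa l'"
  unfolding objK_def using assms by (intro arg_cong2[where f = minus] sum.cong) auto

lemma objK_add_direction:
  assumes "dotK K mu d = 0"
  shows "objK K mu nu kappa (\<lambda>k. l k + s * d k)
       = objK K mu nu kappa l + s * (dotK K kappa d - dotK K mu l * dotK K nu d)"
  unfolding objK_eq_dotK dotK_add_scaled assms by (simp add: algebra_simps)

lemma simplexK_move_to_face:
  assumes l: "l \<in> simplexK K" and d_sum: "(\<Sum>k=1..K. d k) = 0"
    and neg: "\<exists>k\<in>{1..K}. d k < 0"
  obtains s k0 where "0 \<le> s" "k0 \<in> {1..K}" "d k0 < 0"
    "(\<lambda>k. l k + s * d k) \<in> simplexK K" "l k0 + s * d k0 = 0"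
proof -
  have l_nonneg: "\<forall>k\<in>{1..K}. 0 \<le> l k" and l_sum: "(\<Sum>k=1..K. l k) = 1"
    using l unfolding simplexK_def by auto
  define N where "N = {k\<in>{1..K}. d k < 0}"
  have "finite N" "N \<noteq> {}" using neg unfolding N_def by auto
  then obtain k0 where k0: "k0 \<in> N" and k0_min: "\<And>k. k \<in> N \<Longrightarrow> l k0 / - d k0 \<le> l k / - d k"
    using arg_min_if_finite[of N "\<lambda>k. l k / - d k"] by (metis not_le)
  define s where "s = l k0 / - d k0"
  have k0_neg: "k0 \<in> {1..K}" "d k0 < 0" using k0 unfolding N_def by auto
  have s_nonneg: "0 \<le> s" unfolding s_def using k0_neg l_nonneg by (simp add: divide_nonneg_neg)
  have "0 \<le> l k + s * d k" if k: "k \<in> {1..K}" for k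
  proof (cases "d k < 0")
    case True
    then have "s \<le> l k / - d k" unfolding s_def using k k0_min N_def by simp
    then have "s * - d k \<le> l k" using True pos_le_divide_eq[of "- d k" s "l k"] by linarith
    then show ?thesis by simp
  next
    case False
    then show ?thesis using l_nonneg k s_nonneg by simp
  qed
  moreover have "(\<Sum>k=1..K. l k + s * d k) = 1"
    using l_sum d_sum by (simp add: sum.distrib sum_distrib_left[symmetric])
  ultimately have "(\<lambda>k. l k + s * d k) \<in> simplexK K" unfolding simplexK_def by simp
  moreover have "l k0 + s * d k0 = 0" unfolding s_def using k0_neg by simp
  ultimately show thesis using that s_nonneg k0_neg by blast
qed

lemma sum_neg_entry:
  fixes d :: "'a \<Rightarrow> real"
  assumes "finite A" "sum d A = 0" "\<exists>k\<in>A. d k \<noteq> 0"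
  shows "\<exists>k\<in>A. d k < 0"
  using assms sum_nonneg_eq_0_iff[of A d] by force

lemma sum_supported:
  fixes f :: "nat \<Rightarrow> 'a::comm_monoid_add"
  assumes "A \<subseteq> {1..K}" "\<forall>k\<in>{1..K} - A. f k = 0"
  shows "(\<Sum>k=1..K. f k) = sum f A"
  by (rule sum.mono_neutral_right) (use assms in auto)

text \<open>Unless mu a = mu b, the direction is the cross product of (1, 1, 1) and
  (mu a, mu b, mu c), placed on the coordinates a, b, c.\<close>
lemma balancing_direction:
  assumes abc: "a \<in> {1..K}" "b \<in> {1..K}" "c \<in> {1..K}" and distinct: "a \<noteq> b" "a \<noteq> c" "b \<noteq> c"
  obtains d where "\<And>k. k \<notin> {a, b, c} \<Longrightarrow> d k = 0" "(\<Sum>k=1..K. d k) = 0"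
    "dotK K mu d = 0" "\<exists>k\<in>{a, b, c}. d k \<noteq> 0"
proof -
  define d :: "nat \<Rightarrow> real" where
    "d = (if mu a = mu b then (\<lambda>k. if k = a then 1 else if k = b then -1 else 0)
          else (\<lambda>k. if k = a then mu b - mu c else if k = b then mu c - mu a
                    else if k = c then mu a - mu b else 0))"
  have supp: "\<And>k. k \<notin> {a, b, c} \<Longrightarrow> d k = 0" unfolding d_def by auto
  have abc_sub: "{a, b, c} \<subseteq> {1..K}" using abc by simp
  have "(\<Sum>k=1..K. d k) = 0"
    by (subst sum_supported[OF abc_sub]) (use supp distinct in \<open>auto simp: d_def\<close>)
  moreover have "dotK K mu d = 0"
    unfolding dotK_def
    by (subst sum_supported[OF abc_sub]) (use supp distinct in \<open>auto simp: d_def algebra_simps\<close>)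
  moreover have "\<exists>k\<in>{a, b, c}. d k \<noteq> 0"
    using distinct by (cases "mu a = mu b") (auto simp: d_def)
  ultimately show thesis using that supp by blast
qed

lemma objK_shrink_support:
  assumes l: "l \<in> simplexK K" and S: "S \<subseteq> {1..K}" "3 \<le> card S"
    and supp: "\<forall>k\<in>{1..K} - S. l k = 0"
  obtains l' k0 where "l' \<in> simplexK K" "k0 \<in> S" "\<forall>k\<in>{1..K} - (S - {k0}). l' k = 0"
    "objK K mu nu kappa l \<le> objK K mu nu kappa l'"
proof -
  obtain a b c where abc: "a \<in> S" "b \<in> S" "c \<in> S" and distinct: "a \<noteq> b" "a \<noteq> c" "b \<noteq> c"
  proof -
    obtain T where "T \<subseteq> S" "card T = 3" using obtain_subset_with_card_n[OF S(2)] by metis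
    moreover obtain a b c where "T = {a, b, c}" "a \<noteq> b" "a \<noteq> c" "b \<noteq> c"
      using \<open>card T = 3\<close> card_3_iff by metis
    ultimately show thesis using that[of a b c] by blast
  qed
  have abcK: "a \<in> {1..K}" "b \<in> {1..K}" "c \<in> {1..K}" using abc S(1) by auto
  define slope where "slope d = dotK K kappa d - dotK K mu l * dotK K nu d" for d
  obtain d0 where d0: "\<And>k. k \<notin> {a, b, c} \<Longrightarrow> d0 k = 0" "(\<Sum>k=1..K. d0 k) = 0"
    "dotK K mu d0 = 0" "\<exists>k\<in>{a, b, c}. d0 k \<noteq> 0"
    using balancing_direction[OF abcK distinct] by blast
  obtain d where d: "\<And>k. k \<notin> {a, b, c} \<Longrightarrow> d k = 0" "(\<Sum>k=1..K. d k) = 0"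
    "dotK K mu d = 0" "\<exists>k\<in>{a, b, c}. d k \<noteq> 0" "0 \<le> slope d"
  proof (cases "0 \<le> slope d0")
    case True
    then show thesis using that d0 by blast
  next
    case False
    have "slope (\<lambda>k. - d0 k) = - slope d0" unfolding slope_def dotK_uminus by simp
    moreover have "(\<Sum>k=1..K. - d0 k) = 0" "dotK K mu (\<lambda>k. - d0 k) = 0"
      using d0(2,3) by (simp_all add: sum_negf dotK_uminus)
    ultimately show thesis
      using that[of "\<lambda>k. - d0 k"] d0(1,4) False by auto
  qed
  have "\<exists>k\<in>{1..K}. d k \<noteq> 0" using d(4) abcK by auto
  then have "\<exists>k\<in>{1..K}. d k < 0" by (rule sum_neg_entry[OF finite_atLeastAtMost d(2)])
  then obtain s k0 where s: "0 \<le> s" and k0: "k0 \<in> {1..K}" "d k0 < 0"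
    and moved: "(\<lambda>k. l k + s * d k) \<in> simplexK K" "l k0 + s * d k0 = 0"
    by (rule simplexK_move_to_face[OF l d(2)])
  have k0S: "k0 \<in> S" using d(1) k0(2) abc by force
  have "l k + s * d k = 0" if "k \<in> {1..K} - (S - {k0})" for k
  proof (cases "k = k0")
    case False
    then have "k \<notin> S" using that by blast
    moreover have "d k = 0" using \<open>k \<notin> S\<close> abc by (intro d(1)) auto
    ultimately show ?thesis using that supp by simp
  qed (use moved(2) in simp)
  moreover have "objK K mu nu kappa l \<le> objK K mu nu kappa (\<lambda>k. l k + s * d k)"
    unfolding objK_add_direction[OF d(3)] slope_def[symmetric] using s d(5) by simp
  ultimately show thesis using that moved(1) k0S by blast
qed

lemma objK_le_two_point_supported:
  assumes "l \<in> simplexK K"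
  obtains l' i j where "l' \<in> simplexK K" "i \<in> {1..K}" "j \<in> {1..K}"
    "\<forall>k\<in>{1..K} - {i, j}. l' k = 0" "objK K mu nu kappa l \<le> objK K mu nu kappa l'"
proof -
  have two_point: "\<exists>l' i j. l' \<in> simplexK K \<and> i \<in> {1..K} \<and> j \<in> {1..K} \<and> (\<forall>k\<in>{1..K} - {i, j}. l' k = 0)
          \<and> objK K mu nu kappa l \<le> objK K mu nu kappa l'"
    if "l \<in> simplexK K" "S \<subseteq> {1..K}" "\<forall>k\<in>{1..K} - S. l k = 0" for S l
    using that
  proof (induction "card S" arbitrary: S l rule: less_induct)
    case less
    show ?case
    proof (cases "card S \<le> 2")
      case True
      have "S \<noteq> {}"
      proof
        assume "S = {}"
        then have "(\<Sum>k=1..K. l k) = 0" using less.prems(3) by simp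
        then show False using less.prems(1) unfolding simplexK_def by simp
      qed
      moreover have "finite S" using less.prems(2) finite_subset by blast
      ultimately consider "card S = 1" | "card S = 2" using True card_0_eq[of S] by linarith
      then obtain i j where ij: "S = {i, j}"
      proof cases
        case 1
        then obtain i where "S = {i}" by (auto simp: card_1_singleton_iff)
        then show thesis using that[of i i] by simp
      next
        case 2
        then show thesis using that by (auto simp: card_2_iff)
      qed
      have "i \<in> {1..K}" "j \<in> {1..K}" using ij less.prems(2) by auto
      with less.prems(1,3) show ?thesis unfolding ij by blast
    next
      case False
      then have "3 \<le> card S" by simp
      then obtain l' k0 where l': "l' \<in> simplexK K" "k0 \<in> S" "\<forall>k\<in>{1..K} - (S - {k0}). l' k = 0"
        and le: "objK K mu nu kappa l \<le> objK K mu nu kappa l'"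
        using objK_shrink_support[OF less.prems(1,2) _ less.prems(3)] by blast
      have smaller: "card (S - {k0}) < card S"
        using l'(2) False by (simp add: card_Diff1_less card.infinite)
      have "S - {k0} \<subseteq> {1..K}" using less.prems(2) by blast
      then obtain l'' i j where l'': "l'' \<in> simplexK K" "i \<in> {1..K}" "j \<in> {1..K}"
        "\<forall>k\<in>{1..K} - {i, j}. l'' k = 0" and le': "objK K mu nu kappa l' \<le> objK K mu nu kappa l''"
        using less.hyps[OF smaller l'(1) _ l'(3)] by blast
      have "objK K mu nu kappa l \<le> objK K mu nu kappa l''" using le le' by linarith
      with l'' show ?thesis by blast
    qed
  qed
  have "\<forall>k\<in>{1..K} - {1..K}. l k = 0" by simp
  from two_point[OF assms subset_refl this] that show thesis by blast
qed

definition edge_point :: "nat \<Rightarrow> nat \<Rightarrow> real \<Rightarrow> nat \<Rightarrow> real" where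
  "edge_point i j t = (\<lambda>k. if k = i then t else if k = j then 1 - t else 0)"

lemma edge_point_swap: "i \<noteq> j \<Longrightarrow> edge_point i j t = edge_point j i (1 - t)"
  unfolding edge_point_def by auto

lemma edge_point_in_simplexK:
  assumes "i \<noteq> j" "i \<in> {1..K}" "j \<in> {1..K}" "0 \<le> t" "t \<le> 1"
  shows "edge_point i j t \<in> simplexK K"
proof -
  have "(\<Sum>k=1..K. edge_point i j t k) = 1"
    using assms by (subst sum_supported[of "{i, j}"]) (auto simp: edge_point_def)
  then show ?thesis using assms unfolding simplexK_def edge_point_def by auto
qed

lemma dotK_edge_point:
  assumes "i \<noteq> j" "i \<in> {1..K}" "j \<in> {1..K}"
  shows "dotK K c (edge_point i j t) = t * c i + (1 - t) * c j"
  unfolding dotK_def using assms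
  by (subst sum_supported[of "{i, j}"]) (auto simp: edge_point_def)

lemma objK_edge_point:
  assumes "i \<noteq> j" "i \<in> {1..K}" "j \<in> {1..K}"
  shows "objK K mu nu kappa (edge_point i j t)
       = t * (kappa i - mu i * nu i) + (1 - t) * (kappa j - mu j * nu j)
         + (mu j - mu i) * (nu i - nu j) * t * (t - 1)"
  unfolding objK_eq_dotK dotK_edge_point[OF assms] by (simp add: algebra_simps)

lemma objK_supported_on_edge:
  assumes l: "l \<in> simplexK K" and ij: "i \<noteq> j" "i \<in> {1..K}" "j \<in> {1..K}"
    and supp: "\<forall>k\<in>{1..K} - {i, j}. l k = 0"
  shows "0 \<le> l i" "l i \<le> 1" "objK K mu nu kappa l = objK K mu nu kappa (edge_point i j (l i))"
proof -
  have "l i + l j = 1"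
    using l ij sum_supported[of "{i, j}" K l] supp unfolding simplexK_def by simp
  moreover have "0 \<le> l i" "0 \<le> l j" using l ij unfolding simplexK_def by auto
  ultimately show "0 \<le> l i" "l i \<le> 1" by auto
  show "objK K mu nu kappa l = objK K mu nu kappa (edge_point i j (l i))"
    using supp \<open>l i + l j = 1\<close> by (intro objK_cong) (auto simp: edge_point_def)
qed

lemma vertex_in_simplexK:
  assumes "i \<in> {1..K}"
  shows "(\<lambda>k. if k = i then 1 else 0) \<in> simplexK K"
  using assms unfolding simplexK_def by simp

lemma objK_vertex:
  assumes "i \<in> {1..K}"
  shows "objK K mu nu kappa (\<lambda>k. if k = i then 1 else 0) = kappa i - mu i * nu i"
proof -
  have "dotK K c (\<lambda>k. if k = i then 1 else 0) = c i" for c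
  proof -
    have "dotK K c (\<lambda>k. if k = i then 1 else 0) = (\<Sum>k=1..K. if k = i then c k else 0)"
      unfolding dotK_def by (rule sum.cong) auto
    then show ?thesis using assms by simp
  qed
  then show ?thesis unfolding objK_eq_dotK by simp
qed

lemma objK_supported_on_vertex:
  assumes l: "l \<in> simplexK K" and i: "i \<in> {1..K}" and supp: "\<forall>k\<in>{1..K} - {i}. l k = 0"
  shows "objK K mu nu kappa l = kappa i - mu i * nu i"
proof -
  have "(\<Sum>k=1..K. l k) = l i"
    using sum_supported[of "{i}" K l] i supp by simp
  then have "l i = 1" using l unfolding simplexK_def by simp
  then have "objK K mu nu kappa l = objK K mu nu kappa (\<lambda>k. if k = i then 1 else 0)"
    using supp by (intro objK_cong) auto
  then show ?thesis using objK_vertex[OF i] by simp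
qed

lemma convex_comb_between:
  fixes a b t :: real
  assumes "0 \<le> t" "t \<le> 1"
  shows "min a b \<le> t * a + (1 - t) * b" "t * a + (1 - t) * b \<le> max a b"
  using convex_bound_le[of a "max a b" b "t" "1 - t"] convex_bound_le[of "- a" "- min a b" "- b" t "1 - t"] assms
  by auto

lemma between_convex_comb:
  fixes a b x :: real
  assumes "a \<noteq> b" "min a b \<le> x" "x \<le> max a b"
  defines "t \<equiv> (x - b) / (a - b)"
  shows "0 \<le> t" "t \<le> 1" "t * a + (1 - t) * b = x"
proof -
  show "0 \<le> t" "t \<le> 1" unfolding t_def using assms
    by (cases "a < b"; auto simp: zero_le_divide_iff divide_le_eq_1 min_def max_def)+
  have "t * (a - b) = x - b" unfolding t_def using assms by simp
  then show "t * a + (1 - t) * b = x" by (simp add: algebra_simps)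
qed

lemma clamp_dist_le:
  fixes x v lo hi :: real
  assumes "lo \<le> x" "x \<le> hi"
  shows "(min (max v lo) hi - v)\<^sup>2 \<le> (x - v)\<^sup>2"
proof -
  have "\<bar>min (max v lo) hi - v\<bar> \<le> \<bar>x - v\<bar>" using assms by (auto simp: abs_if min_def max_def)
  then show ?thesis by (simp add: abs_le_square_iff)
qed

definition qvertex :: "(nat \<Rightarrow> real) \<Rightarrow> (nat \<Rightarrow> real) \<Rightarrow> (nat \<Rightarrow> real) \<Rightarrow> nat \<Rightarrow> nat \<Rightarrow> real" where
  "qvertex mu nu kappa i j =
     (kappa j - mu j * nu j - kappa i + mu i * nu i) / (2 * (mu j - mu i)) + (nu i + nu j) / 2"

lemma mutilde_clamp:
  "mu i \<noteq> mu j \<Longrightarrow> nu i \<noteq> nu j \<Longrightarrow>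
     mutilde mu nu kappa i j = min (max (qvertex mu nu kappa i j) (min (nu i) (nu j))) (max (nu i) (nu j))"
  unfolding mutilde_def qvertex_def by simp

lemma qfun_at_nu_left: "qfun mu nu kappa i j (nu i) = kappa i - mu i * nu i"
  unfolding qfun_def by simp

lemma qfun_at_nu_right:
  "mu i \<noteq> mu j \<Longrightarrow> nu i \<noteq> nu j \<Longrightarrow> qfun mu nu kappa i j (nu j) = kappa j - mu j * nu j"
  unfolding qfun_def by (simp add: field_simps)

lemma qfun_convex_comb:
  assumes "mu i \<noteq> mu j" "nu i \<noteq> nu j"
  shows "qfun mu nu kappa i j (t * nu i + (1 - t) * nu j)
       = t * (kappa i - mu i * nu i) + (1 - t) * (kappa j - mu j * nu j)
         + (mu j - mu i) * (nu i - nu j) * t * (t - 1)"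
proof -
  have "nu j - nu i \<noteq> 0" using assms by simp
  then show ?thesis using assms unfolding qfun_def by (simp add: field_simps)
qed

lemma qfun_vertex_form:
  assumes "mu i \<noteq> mu j" "nu i \<noteq> nu j"
  shows "qfun mu nu kappa i j x = qfun mu nu kappa i j (qvertex mu nu kappa i j)
           + (mu i - mu j) / (nu j - nu i) * (x - qvertex mu nu kappa i j)\<^sup>2"
proof -
  define v where "v = qvertex mu nu kappa i j"
  define D where "D = kappa j - kappa i - mu j * nu j + mu i * nu i"
  define P where "P y = (y - nu i) * (y - nu j) * (mu i - mu j) + (y - nu i) * D" for y
  have q: "qfun mu nu kappa i j y = P y / (nu j - nu i) + (kappa i - mu i * nu i)" for y
    using assms unfolding qfun_def P_def D_def by simp
  have "(mu i - mu j) * (2 * v - nu i - nu j) + D = 0"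
    using assms unfolding v_def D_def qvertex_def by (simp add: field_simps)
  moreover have "P x - P v - (mu i - mu j) * (x - v)\<^sup>2
      = (x - v) * ((mu i - mu j) * (2 * v - nu i - nu j) + D)"
    unfolding P_def by (simp add: algebra_simps power2_eq_square)
  ultimately have "P x = P v + (mu i - mu j) * (x - v)\<^sup>2" by simp
  then show ?thesis unfolding q v_def[symmetric] by (simp add: add_divide_distrib)
qed

lemma qfun_le_qfun_mutilde:
  assumes concave: "(mu j - mu i) * (nu i - nu j) < 0"
    and x: "min (nu i) (nu j) \<le> x" "x \<le> max (nu i) (nu j)"
  shows "qfun mu nu kappa i j x \<le> qfun mu nu kappa i j (mutilde mu nu kappa i j)"
proof -
  have nondeg: "mu i \<noteq> mu j" "nu i \<noteq> nu j" using concave by auto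
  have "(mu i - mu j) * (nu j - nu i) < 0" using concave by (simp add: algebra_simps)
  then have neg: "(mu i - mu j) / (nu j - nu i) < 0" by (simp add: divide_less_0_iff mult_less_0_iff)
  let ?v = "qvertex mu nu kappa i j"
  have "(mu i - mu j) / (nu j - nu i) * (x - ?v)\<^sup>2
        \<le> (mu i - mu j) / (nu j - nu i) * (mutilde mu nu kappa i j - ?v)\<^sup>2"
    unfolding mutilde_clamp[OF nondeg] using clamp_dist_le[OF x] neg
    by (intro mult_left_mono_neg) auto
  then show ?thesis
    using qfun_vertex_form[OF nondeg, of kappa x] qfun_vertex_form[OF nondeg, of kappa "mutilde mu nu kappa i j"]
    by linarith
qed

lemma edge_value_le_candidates:
  assumes t: "0 \<le> t" "t \<le> 1"
  shows "t * (kappa i - mu i * nu i) + (1 - t) * (kappa j - mu j * nu j)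
           + (mu j - mu i) * (nu i - nu j) * t * (t - 1)
         \<le> max (max (kappa i - mu i * nu i) (kappa j - mu j * nu j))
               (qfun mu nu kappa i j (mutilde mu nu kappa i j))"
proof (cases "0 \<le> (mu j - mu i) * (nu i - nu j)")
  case True
  then have "(mu j - mu i) * (nu i - nu j) * t * (t - 1) \<le> 0"
    using t by (simp add: mult_nonneg_nonpos)
  moreover have "t * (kappa i - mu i * nu i) + (1 - t) * (kappa j - mu j * nu j)
      \<le> max (kappa i - mu i * nu i) (kappa j - mu j * nu j)"
    using convex_comb_between(2)[OF t] .
  ultimately show ?thesis by linarith
next
  case False
  then have concave: "(mu j - mu i) * (nu i - nu j) < 0" by simp
  then have nondeg: "mu i \<noteq> mu j" "nu i \<noteq> nu j" by auto
  have "t * (kappa i - mu i * nu i) + (1 - t) * (kappa j - mu j * nu j)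
           + (mu j - mu i) * (nu i - nu j) * t * (t - 1)
        = qfun mu nu kappa i j (t * nu i + (1 - t) * nu j)"
    using qfun_convex_comb[OF nondeg] by simp
  also have "\<dots> \<le> qfun mu nu kappa i j (mutilde mu nu kappa i j)"
    using qfun_le_qfun_mutilde[OF concave convex_comb_between[OF t]] .
  finally show ?thesis by simp
qed

lemma qfun_mutilde_attained:
  assumes i: "i \<in> {1..K}" and j: "j \<in> {1..K}"
  shows "\<exists>l\<in>simplexK K. objK K mu nu kappa l = qfun mu nu kappa i j (mutilde mu nu kappa i j)"
proof (cases "mu i \<noteq> mu j \<and> nu i \<noteq> nu j")
  case True
  then have nondeg: "mu i \<noteq> mu j" "nu i \<noteq> nu j" and "i \<noteq> j" by auto
  let ?x = "mutilde mu nu kappa i j"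
  have "min (nu i) (nu j) \<le> ?x" "?x \<le> max (nu i) (nu j)"
    unfolding mutilde_clamp[OF nondeg] by auto
  then obtain t where t: "0 \<le> t" "t \<le> 1" "t * nu i + (1 - t) * nu j = ?x"
    using between_convex_comb[OF nondeg(2)] by blast
  have "objK K mu nu kappa (edge_point i j t) = qfun mu nu kappa i j ?x"
    unfolding objK_edge_point[OF \<open>i \<noteq> j\<close> i j] qfun_convex_comb[OF nondeg, symmetric] t(3) ..
  then show ?thesis using edge_point_in_simplexK[OF \<open>i \<noteq> j\<close> i j t(1,2)] by blast
next
  case False
  then have "qfun mu nu kappa i j (mutilde mu nu kappa i j) = kappa i - mu i * nu i"
    unfolding qfun_def by auto
  then show ?thesis using vertex_in_simplexK[OF i] objK_vertex[OF i] by metis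
qed

lemma qfun_mutilde_cases:
  obtains "qfun mu nu kappa i j (mutilde mu nu kappa i j) = kappa i - mu i * nu i"
  | "qfun mu nu kappa i j (mutilde mu nu kappa i j) = kappa j - mu j * nu j"
  | "mu i \<noteq> mu j" "nu i \<noteq> nu j"
    "min (nu i) (nu j) \<le> qvertex mu nu kappa i j" "qvertex mu nu kappa i j \<le> max (nu i) (nu j)"
    "mutilde mu nu kappa i j = qvertex mu nu kappa i j"
proof (cases "mu i \<noteq> mu j \<and> nu i \<noteq> nu j")
  case True
  then have nondeg: "mu i \<noteq> mu j" "nu i \<noteq> nu j" by auto
  let ?v = "qvertex mu nu kappa i j"
  show thesis
  proof (cases "min (nu i) (nu j) \<le> ?v \<and> ?v \<le> max (nu i) (nu j)")
    case True
    then show thesis using that(3)[OF nondeg] unfolding mutilde_clamp[OF nondeg] by simp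
  next
    case False
    then have "mutilde mu nu kappa i j \<in> {nu i, nu j}"
      unfolding mutilde_clamp[OF nondeg] by (auto simp: min_def max_def)
    then show thesis using that(1,2) qfun_at_nu_left[of mu nu kappa i j] qfun_at_nu_right[OF nondeg, of kappa]
      by auto
  qed
next
  case False
  then show thesis using that(1) unfolding qfun_def by auto
qed

lemma optimal_edge_weight:
  assumes "mu i \<noteq> mu j" "nu i \<noteq> nu j"
  shows "1/2 - (kappa j - mu j * nu j - kappa i + mu i * nu i) / (2 * (mu j - mu i) * (nu j - nu i))
       = (qvertex mu nu kappa i j - nu j) / (nu i - nu j)"
proof -
  define D where "D = kappa j - mu j * nu j - kappa i + mu i * nu i"
  define u where "u = mu j - mu i"
  have "u \<noteq> 0" "nu j - nu i \<noteq> 0" "nu i - nu j \<noteq> 0" using assms unfolding u_def by auto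
  then have "1/2 - D / (2 * u * (nu j - nu i)) = (D / (2 * u) + (nu i + nu j) / 2 - nu j) / (nu i - nu j)"
    by (simp add: field_simps)
  then show ?thesis unfolding qvertex_def D_def u_def by (simp add: mult.assoc)
qed

lemma optimal_edge_point:
  assumes nondeg: "mu i \<noteq> mu j" "nu i \<noteq> nu j" and ij: "i \<in> {1..K}" "j \<in> {1..K}"
    and between: "min (nu i) (nu j) \<le> qvertex mu nu kappa i j" "qvertex mu nu kappa i j \<le> max (nu i) (nu j)"
  shows "let li0 = 1/2 - (kappa j - mu j * nu j - kappa i + mu i * nu i)
                           / (2 * (mu j - mu i) * (nu j - nu i));
             l = (\<lambda>k. if k = i then li0 else if k = j then 1 - li0 else 0)
         in l \<in> simplexK K \<and> objK K mu nu kappa l = qfun mu nu kappa i j (qvertex mu nu kappa i j)"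
proof -
  define t where "t = 1/2 - (kappa j - mu j * nu j - kappa i + mu i * nu i)
                           / (2 * (mu j - mu i) * (nu j - nu i))"
  have "i \<noteq> j" using nondeg by auto
  have t: "0 \<le> t" "t \<le> 1" "t * nu i + (1 - t) * nu j = qvertex mu nu kappa i j"
    unfolding t_def optimal_edge_weight[OF nondeg] using between_convex_comb[OF nondeg(2) between] by auto
  have "objK K mu nu kappa (edge_point i j t) = qfun mu nu kappa i j (qvertex mu nu kappa i j)"
    unfolding objK_edge_point[OF \<open>i \<noteq> j\<close> ij] qfun_convex_comb[OF nondeg, symmetric] t(3) ..
  then show ?thesis
    using edge_point_in_simplexK[OF \<open>i \<noteq> j\<close> ij t(1,2)] unfolding Let_def t_def[symmetric] edge_point_def
    by simp
qed

definition vertex_values :: "nat \<Rightarrow> (nat \<Rightarrow> real) \<Rightarrow> (nat \<Rightarrow> real) \<Rightarrow> (nat \<Rightarrow> real) \<Rightarrow> real set" where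
  "vertex_values K mu nu kappa = {kappa i - mu i * nu i | i. i \<in> {1..K}}"

definition edge_values :: "nat \<Rightarrow> (nat \<Rightarrow> real) \<Rightarrow> (nat \<Rightarrow> real) \<Rightarrow> (nat \<Rightarrow> real) \<Rightarrow> real set" where
  "edge_values K mu nu kappa =
     {qfun mu nu kappa i j (mutilde mu nu kappa i j) | i j. 1 \<le> i \<and> i \<le> j \<and> j \<le> K}"

lemma finite_vertex_values: "finite (vertex_values K mu nu kappa)"
  unfolding vertex_values_def by simp

lemma finite_edge_values: "finite (edge_values K mu nu kappa)"
proof -
  have "edge_values K mu nu kappa
        \<subseteq> (\<lambda>(i, j). qfun mu nu kappa i j (mutilde mu nu kappa i j)) ` ({1..K} \<times> {1..K})"
    unfolding edge_values_def by auto
  then show ?thesis by (rule finite_subset) simp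
qed

lemma vertex_values_nonempty: "K \<ge> 1 \<Longrightarrow> vertex_values K mu nu kappa \<noteq> {}"
  unfolding vertex_values_def by auto

lemma edge_values_nonempty: "K \<ge> 1 \<Longrightarrow> edge_values K mu nu kappa \<noteq> {}"
  unfolding edge_values_def by auto

lemma vertex_value_le_Max:
  "i \<in> {1..K} \<Longrightarrow> kappa i - mu i * nu i \<le> Max (vertex_values K mu nu kappa)"
  by (rule Max_ge[OF finite_vertex_values]) (auto simp: vertex_values_def)

lemma edge_value_le_Max:
  "1 \<le> i \<Longrightarrow> i \<le> j \<Longrightarrow> j \<le> K \<Longrightarrow>
     qfun mu nu kappa i j (mutilde mu nu kappa i j) \<le> Max (edge_values K mu nu kappa)"
  by (rule Max_ge[OF finite_edge_values]) (auto simp: edge_values_def)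

lemma objK_edge_point_le_max_candidates:
  assumes ij: "1 \<le> i" "i < j" "j \<le> K" and t: "0 \<le> t" "t \<le> 1"
  shows "objK K mu nu kappa (edge_point i j t)
         \<le> max (Max (vertex_values K mu nu kappa)) (Max (edge_values K mu nu kappa))"
proof -
  have ij': "i \<noteq> j" "i \<in> {1..K}" "j \<in> {1..K}" using ij by auto
  have "objK K mu nu kappa (edge_point i j t)
        \<le> max (max (kappa i - mu i * nu i) (kappa j - mu j * nu j))
              (qfun mu nu kappa i j (mutilde mu nu kappa i j))"
    unfolding objK_edge_point[OF ij'] by (rule edge_value_le_candidates[OF t])
  also have "\<dots> \<le> max (Max (vertex_values K mu nu kappa)) (Max (edge_values K mu nu kappa))"
    using ij by (intro max.mono max.boundedI vertex_value_le_Max edge_value_le_Max) auto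
  finally show ?thesis .
qed

lemma objK_le_max_candidates:
  assumes l: "l \<in> simplexK K"
  shows "objK K mu nu kappa l
         \<le> max (Max (vertex_values K mu nu kappa)) (Max (edge_values K mu nu kappa))"
    (is "_ \<le> ?M")
proof -
  obtain l' i j where l': "l' \<in> simplexK K" "i \<in> {1..K}" "j \<in> {1..K}"
    "\<forall>k\<in>{1..K} - {i, j}. l' k = 0" and le: "objK K mu nu kappa l \<le> objK K mu nu kappa l'"
    using objK_le_two_point_supported[OF l] .
  have "objK K mu nu kappa l' \<le> ?M"
  proof (cases i j rule: linorder_cases)
    case less
    then show ?thesis using objK_supported_on_edge[OF l'(1) _ l'(2,3,4)]
        objK_edge_point_le_max_candidates[of i j K "l' i"] l'(2,3) by auto
  next
    case equal
    then have "objK K mu nu kappa l' = kappa i - mu i * nu i"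
      using objK_supported_on_vertex[OF l'(1,2)] l'(4) by simp
    then show ?thesis using vertex_value_le_Max[OF l'(2), of kappa mu nu] by simp
  next
    case greater
    then have "i \<noteq> j" by simp
    note on_ij = objK_supported_on_edge[OF l'(1) this l'(2,3,4)]
    have "objK K mu nu kappa l' = objK K mu nu kappa (edge_point j i (1 - l' i))"
      unfolding on_ij(3) edge_point_swap[OF \<open>i \<noteq> j\<close>] ..
    also have "\<dots> \<le> ?M"
      using objK_edge_point_le_max_candidates[of j i K "1 - l' i"] on_ij(1,2) l'(2,3) greater by auto
    finally show ?thesis .
  qed
  with le show ?thesis by linarith
qed

lemma max_candidates_attained:
  assumes "K \<ge> 1"
  shows "\<exists>l\<in>simplexK K. objK K mu nu kappa l
           = max (Max (vertex_values K mu nu kappa)) (Max (edge_values K mu nu kappa))"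
proof (cases "Max (edge_values K mu nu kappa) \<le> Max (vertex_values K mu nu kappa)")
  case True
  have "Max (vertex_values K mu nu kappa) \<in> vertex_values K mu nu kappa"
    using Max_in[OF finite_vertex_values vertex_values_nonempty[OF assms]] .
  then obtain i where i: "i \<in> {1..K}" and "Max (vertex_values K mu nu kappa) = kappa i - mu i * nu i"
    unfolding vertex_values_def by blast
  with True have "objK K mu nu kappa (\<lambda>k. if k = i then 1 else 0)
                  = max (Max (vertex_values K mu nu kappa)) (Max (edge_values K mu nu kappa))"
    using objK_vertex[OF i] by simp
  then show ?thesis using vertex_in_simplexK[OF i] by blast
next
  case False
  have "Max (edge_values K mu nu kappa) \<in> edge_values K mu nu kappa"
    using Max_in[OF finite_edge_values edge_values_nonempty[OF assms]] .
  then obtain i j where ij: "1 \<le> i" "i \<le> j" "j \<le> K"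
    and "Max (edge_values K mu nu kappa) = qfun mu nu kappa i j (mutilde mu nu kappa i j)"
    unfolding edge_values_def by blast
  with False have "max (Max (vertex_values K mu nu kappa)) (Max (edge_values K mu nu kappa))
                   = qfun mu nu kappa i j (mutilde mu nu kappa i j)" by simp
  moreover have "i \<in> {1..K}" "j \<in> {1..K}" using ij by auto
  ultimately show ?thesis using qfun_mutilde_attained by metis
qed

lemma VK_eq_max_candidates:
  assumes "K \<ge> 1"
  shows "VK K mu nu kappa = max (Max (vertex_values K mu nu kappa)) (Max (edge_values K mu nu kappa))"
proof -
  obtain l where "l \<in> simplexK K"
    "objK K mu nu kappa l = max (Max (vertex_values K mu nu kappa)) (Max (edge_values K mu nu kappa))"
    using max_candidates_attained[OF assms] by blast
  then have "max (Max (vertex_values K mu nu kappa)) (Max (edge_values K mu nu kappa))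
             \<in> objK K mu nu kappa ` simplexK K" by (metis image_eqI)
  then show ?thesis unfolding VK_def by (rule cSup_eq_maximum) (blast intro: objK_le_max_candidates)
qed

lemma optimal_edge_if_no_optimal_vertex:
  assumes K: "K \<ge> 1"
    and none: "\<not> (\<exists>i0\<in>{1..K}. VK K mu nu kappa = kappa i0 - mu i0 * nu i0)"
  shows "\<exists>i0 j0. 1 \<le> i0 \<and> i0 < j0 \<and> j0 \<le> K \<and>
           VK K mu nu kappa = qfun mu nu kappa i0 j0 (mutilde mu nu kappa i0 j0) \<and>
           (let li0 = 1/2 - (kappa j0 - mu j0 * nu j0 - kappa i0 + mu i0 * nu i0)
                            / (2 * (mu j0 - mu i0) * (nu j0 - nu i0));
                l = (\<lambda>j. if j = i0 then li0 else if j = j0 then 1 - li0 else 0)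
            in l \<in> simplexK K \<and> objK K mu nu kappa l = VK K mu nu kappa)"
proof -
  have "VK K mu nu kappa \<notin> vertex_values K mu nu kappa"
    using none unfolding vertex_values_def by blast
  moreover have "VK K mu nu kappa = Max (vertex_values K mu nu kappa)
                 \<or> VK K mu nu kappa = Max (edge_values K mu nu kappa)"
    unfolding VK_eq_max_candidates[OF K] by linarith
  ultimately have "VK K mu nu kappa \<in> edge_values K mu nu kappa"
    using Max_in[OF finite_vertex_values vertex_values_nonempty[OF K]]
      Max_in[OF finite_edge_values edge_values_nonempty[OF K]] by auto
  then obtain i j where ij: "1 \<le> i" "i \<le> j" "j \<le> K"
    and Vq: "VK K mu nu kappa = qfun mu nu kappa i j (mutilde mu nu kappa i j)"
    unfolding edge_values_def by blast
  have iK: "i \<in> {1..K}" and jK: "j \<in> {1..K}" using ij by auto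
  obtain nondeg: "mu i \<noteq> mu j" "nu i \<noteq> nu j"
    and between: "min (nu i) (nu j) \<le> qvertex mu nu kappa i j" "qvertex mu nu kappa i j \<le> max (nu i) (nu j)"
    and at_vertex: "mutilde mu nu kappa i j = qvertex mu nu kappa i j"
  proof (rule qfun_mutilde_cases[of mu nu kappa i j])
    assume "qfun mu nu kappa i j (mutilde mu nu kappa i j) = kappa i - mu i * nu i"
    then show thesis using none iK Vq by auto
  next
    assume "qfun mu nu kappa i j (mutilde mu nu kappa i j) = kappa j - mu j * nu j"
    then show thesis using none jK Vq by auto
  qed
  have "i < j" using ij nondeg by (cases "i = j") auto
  moreover have "let li0 = 1/2 - (kappa j - mu j * nu j - kappa i + mu i * nu i)
                           / (2 * (mu j - mu i) * (nu j - nu i));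
                     l = (\<lambda>k. if k = i then li0 else if k = j then 1 - li0 else 0)
                 in l \<in> simplexK K \<and> objK K mu nu kappa l = VK K mu nu kappa"
    using optimal_edge_point[OF nondeg iK jK between] unfolding Vq at_vertex .
  ultimately show ?thesis using ij Vq by blast
qed

theorem theorem5p3:
  fixes K :: nat and mu nu kappa :: "nat \<Rightarrow> real"
  assumes "K \<ge> 1"
  shows "VK K mu nu kappa =
           max (Max {kappa i - mu i * nu i | i. i \<in> {1..K}})
               (Max {qfun mu nu kappa i j (mutilde mu nu kappa i j) | i j. 1 \<le> i \<and> i \<le> j \<and> j \<le> K})
       \<and> ((\<exists>i0\<in>{1..K}. VK K mu nu kappa = kappa i0 - mu i0 * nu i0) \<longrightarrow>
            (\<forall>i0\<in>{1..K}. VK K mu nu kappa = kappa i0 - mu i0 * nu i0 \<longrightarrow>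
               (\<lambda>j. if j = i0 then 1 else 0) \<in> simplexK K \<and>
               objK K mu nu kappa (\<lambda>j. if j = i0 then 1 else 0) = VK K mu nu kappa))
       \<and> (\<not> (\<exists>i0\<in>{1..K}. VK K mu nu kappa = kappa i0 - mu i0 * nu i0) \<longrightarrow>
            (\<exists>i0 j0. 1 \<le> i0 \<and> i0 < j0 \<and> j0 \<le> K \<and>
               VK K mu nu kappa = qfun mu nu kappa i0 j0 (mutilde mu nu kappa i0 j0) \<and>
               (let li0 = 1/2 - (kappa j0 - mu j0 * nu j0 - kappa i0 + mu i0 * nu i0)
                                / (2 * (mu j0 - mu i0) * (nu j0 - nu i0));
                    l = (\<lambda>j. if j = i0 then li0 else if j = j0 then 1 - li0 else 0)
                in l \<in> simplexK K \<and> objK K mu nu kappa l = VK K mu nu kappa)))"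
proof -
  have vertex_case: "\<forall>i0\<in>{1..K}. VK K mu nu kappa = kappa i0 - mu i0 * nu i0 \<longrightarrow>
               (\<lambda>j. if j = i0 then 1 else 0) \<in> simplexK K \<and>
               objK K mu nu kappa (\<lambda>j. if j = i0 then 1 else 0) = VK K mu nu kappa"
    using vertex_in_simplexK objK_vertex by simp
  show ?thesis
    using VK_eq_max_candidates[OF assms] vertex_case optimal_edge_if_no_optimal_vertex[OF assms]
    unfolding vertex_values_def edge_values_def by blast
qed

end
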